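(* A pushout square in $\mathbf{MetCH_{sep}}$ all four of whose morphisms are embeddings is also a pullback square in $\mathbf{MetCH_{sep}}$.
   Context: A metric on a set $X$ is a map $d\colon X\times X\to[0,\infty]$ with $d(x,x)=0$ and $d(x,z)\le d(x,y)+d(y,z)$ (not necessarily symmetric, $\infty$ allowed); separated means $d(x,y)=0=d(y,x)$ implies $x=y$. A separated metric compact Hausdorff space is a compact Hausdorff space with a separated metric $d\colon X\times X\to[0,\infty]$ continuous with respect to the upper topology on $[0,\infty]$ (open sets $]u,\infty]$, plus $\emptyset$ and $[0,\infty]$). $\mathbf{MetCH_{sep}}$: these spaces with continuous non-expansive maps as morphisms. An embedding is an injective morphism $f$ with $d_X(x,y)=d_Y(f(x),f(y))$ for all $x,y$. *)

theory Defs
  imports "HOL-Analysis.Analysis"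
begin

text \<open>An object of MetCH_sep with points in type 'a is a pair (T, d): a topology T whose
  carrier is topspace T, and a (possibly asymmetric, possibly infinite) distance
  d with values in [0,\<infinity>] (ennreal).\<close>

type_synonym 'a metch = "'a topology \<times> ('a \<Rightarrow> 'a \<Rightarrow> ennreal)"

definition carrier_of :: "'a metch \<Rightarrow> 'a set" where
  "carrier_of A = topspace (fst A)"

text \<open>Continuity of d : X \<times> X \<rightarrow> [0,\<infinity>] w.r.t. the upper topology on [0,\<infinity>],
  whose open sets are \<emptyset>, [0,\<infinity>] and the intervals ]u,\<infinity>]:
  the preimage of every ]u,\<infinity>] is open in X \<times> X (the preimages of \<emptyset> and of the
  whole space are trivially open).\<close>

definition upper_continuous :: "'a topology \<Rightarrow> ('a \<Rightarrow> 'a \<Rightarrow> ennreal) \<Rightarrow> bool" where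
  "upper_continuous T d \<longleftrightarrow>
     (\<forall>u::ennreal. openin (prod_topology T T)
        {z \<in> topspace (prod_topology T T). u < d (fst z) (snd z)})"

definition is_metric_on :: "'a set \<Rightarrow> ('a \<Rightarrow> 'a \<Rightarrow> ennreal) \<Rightarrow> bool" where
  "is_metric_on S d \<longleftrightarrow>
     (\<forall>x\<in>S. d x x = 0) \<and> (\<forall>x\<in>S. \<forall>y\<in>S. \<forall>z\<in>S. d x z \<le> d x y + d y z)"

definition separated_on :: "'a set \<Rightarrow> ('a \<Rightarrow> 'a \<Rightarrow> ennreal) \<Rightarrow> bool" where
  "separated_on S d \<longleftrightarrow> (\<forall>x\<in>S. \<forall>y\<in>S. d x y = 0 \<and> d y x = 0 \<longrightarrow> x = y)"

definition MetCH_sep_obj :: "'a metch \<Rightarrow> bool" where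
  "MetCH_sep_obj A \<longleftrightarrow>
     compact_space (fst A) \<and> Hausdorff_space (fst A) \<and>
     is_metric_on (carrier_of A) (snd A) \<and> separated_on (carrier_of A) (snd A) \<and>
     upper_continuous (fst A) (snd A)"

definition MetCH_sep_mor :: "'a metch \<Rightarrow> 'b metch \<Rightarrow> ('a \<Rightarrow> 'b) \<Rightarrow> bool" where
  "MetCH_sep_mor A B f \<longleftrightarrow>
     MetCH_sep_obj A \<and> MetCH_sep_obj B \<and> continuous_map (fst A) (fst B) f \<and>
     (\<forall>x\<in>carrier_of A. \<forall>y\<in>carrier_of A. snd B (f x) (f y) \<le> snd A x y)"

definition MetCH_sep_embedding :: "'a metch \<Rightarrow> 'b metch \<Rightarrow> ('a \<Rightarrow> 'b) \<Rightarrow> bool" where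
  "MetCH_sep_embedding A B f \<longleftrightarrow>
     MetCH_sep_mor A B f \<and> inj_on f (carrier_of A) \<and>
     (\<forall>x\<in>carrier_of A. \<forall>y\<in>carrier_of A. snd A x y = snd B (f x) (f y))"

text \<open>A commutative square
      X --g1--> Y1
      |g2        |f1
      v          v
      Y2 --f2--> P
  Morphisms are identified when they agree on the carrier.\<close>

definition commuting_square ::
  "'x metch \<Rightarrow> 'y1 metch \<Rightarrow> 'y2 metch \<Rightarrow> 'p metch \<Rightarrow>
   ('x \<Rightarrow> 'y1) \<Rightarrow> ('x \<Rightarrow> 'y2) \<Rightarrow> ('y1 \<Rightarrow> 'p) \<Rightarrow> ('y2 \<Rightarrow> 'p) \<Rightarrow> bool" where
  "commuting_square X Y1 Y2 P g1 g2 f1 f2 \<longleftrightarrow>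
     MetCH_sep_mor X Y1 g1 \<and> MetCH_sep_mor X Y2 g2 \<and>
     MetCH_sep_mor Y1 P f1 \<and> MetCH_sep_mor Y2 P f2 \<and>
     (\<forall>x\<in>carrier_of X. f1 (g1 x) = f2 (g2 x))"

text \<open>Pushout property, tested against all objects Z whose points live in the type 'z.\<close>

definition is_pushout ::
  "'z itself \<Rightarrow> 'x metch \<Rightarrow> 'y1 metch \<Rightarrow> 'y2 metch \<Rightarrow> 'p metch \<Rightarrow>
   ('x \<Rightarrow> 'y1) \<Rightarrow> ('x \<Rightarrow> 'y2) \<Rightarrow> ('y1 \<Rightarrow> 'p) \<Rightarrow> ('y2 \<Rightarrow> 'p) \<Rightarrow> bool" where
  "is_pushout (_::'z itself) X Y1 Y2 P g1 g2 f1 f2 \<longleftrightarrow>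
     commuting_square X Y1 Y2 P g1 g2 f1 f2 \<and>
     (\<forall>(Z::'z metch) h1 h2.
        MetCH_sep_mor Y1 Z h1 \<and> MetCH_sep_mor Y2 Z h2 \<and>
        (\<forall>x\<in>carrier_of X. h1 (g1 x) = h2 (g2 x)) \<longrightarrow>
        (\<exists>u. MetCH_sep_mor P Z u \<and>
             (\<forall>y\<in>carrier_of Y1. u (f1 y) = h1 y) \<and>
             (\<forall>y\<in>carrier_of Y2. u (f2 y) = h2 y) \<and>
             (\<forall>v. MetCH_sep_mor P Z v \<and>
                  (\<forall>y\<in>carrier_of Y1. v (f1 y) = h1 y) \<and>
                  (\<forall>y\<in>carrier_of Y2. v (f2 y) = h2 y) \<longrightarrow>
                  (\<forall>p\<in>carrier_of P. v p = u p))))"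

text \<open>Pullback property, tested against all objects W whose points live in the type 'w.\<close>

definition is_pullback ::
  "'w itself \<Rightarrow> 'x metch \<Rightarrow> 'y1 metch \<Rightarrow> 'y2 metch \<Rightarrow> 'p metch \<Rightarrow>
   ('x \<Rightarrow> 'y1) \<Rightarrow> ('x \<Rightarrow> 'y2) \<Rightarrow> ('y1 \<Rightarrow> 'p) \<Rightarrow> ('y2 \<Rightarrow> 'p) \<Rightarrow> bool" where
  "is_pullback (_::'w itself) X Y1 Y2 P g1 g2 f1 f2 \<longleftrightarrow>
     commuting_square X Y1 Y2 P g1 g2 f1 f2 \<and>
     (\<forall>(W::'w metch) k1 k2.
        MetCH_sep_mor W Y1 k1 \<and> MetCH_sep_mor W Y2 k2 \<and>
        (\<forall>w\<in>carrier_of W. f1 (k1 w) = f2 (k2 w)) \<longrightarrow>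
        (\<exists>u. MetCH_sep_mor W X u \<and>
             (\<forall>w\<in>carrier_of W. g1 (u w) = k1 w) \<and>
             (\<forall>w\<in>carrier_of W. g2 (u w) = k2 w) \<and>
             (\<forall>v. MetCH_sep_mor W X v \<and>
                  (\<forall>w\<in>carrier_of W. g1 (v w) = k1 w) \<and>
                  (\<forall>w\<in>carrier_of W. g2 (v w) = k2 w) \<longrightarrow>
                  (\<forall>w\<in>carrier_of W. v w = u w))))"

end

theory Submission
  imports Defs
begin

(* Since the pullback map W -> X can be taken to be g1^-1 o k1, which is continuous because g1
  embeds a compact space into a Hausdorff one, it suffices to show that points a of Y1 and b of Y2
  with f1 a = f2 b come from a common point of X.  To see this, glue Y1 and Y2 along X alone into
  an object Z of MetCH_sep, measuring the distance between the two sides by the shortest route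
  through the image of X in P.  The inclusions of Y1 and Y2 into Z are morphisms that agree on X,
  so the pushout yields u : P -> Z through which they factor; if b did not lie in g2 ` X, then
  Inl a = u (f1 a) = u (f2 b) = Inr b. *)

section \<open>Lower semicontinuous functions\<close>

definition lower_semicontinuous_map :: "'a topology \<Rightarrow> ('a \<Rightarrow> 'b::linorder) \<Rightarrow> bool" where
  "lower_semicontinuous_map T F \<longleftrightarrow> (\<forall>u. openin T {t \<in> topspace T. u < F t})"

lemma lower_semicontinuous_map_iff_closedin_sublevel:
  "lower_semicontinuous_map T F \<longleftrightarrow> (\<forall>u. closedin T {t \<in> topspace T. F t \<le> u})"
proof -
  have "topspace T - {t \<in> topspace T. F t \<le> u} = {t \<in> topspace T. u < F t}" for u
    by (auto simp: not_le)
  then show ?thesis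
    unfolding lower_semicontinuous_map_def closedin_def by simp
qed

lemma lower_semicontinuous_map_cong:
  assumes "\<And>t. t \<in> topspace T \<Longrightarrow> F t = G t"
  shows "lower_semicontinuous_map T F \<longleftrightarrow> lower_semicontinuous_map T G"
proof -
  have "{t \<in> topspace T. u < F t} = {t \<in> topspace T. u < G t}" for u
    using assms by auto
  then show ?thesis
    unfolding lower_semicontinuous_map_def by simp
qed

lemma lower_semicontinuous_map_compose:
  assumes F: "lower_semicontinuous_map T F" and g: "continuous_map S T g"
  shows "lower_semicontinuous_map S (\<lambda>s. F (g s))"
  unfolding lower_semicontinuous_map_def
proof
  fix u
  have "{s \<in> topspace S. u < F (g s)} = {s \<in> topspace S. g s \<in> {t \<in> topspace T. u < F t}}"
    using g by (auto simp: continuous_map_def)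
  moreover have "openin S {s \<in> topspace S. g s \<in> {t \<in> topspace T. u < F t}}"
    using F unfolding lower_semicontinuous_map_def by (intro openin_continuous_map_preimage[OF g]) simp
  ultimately show "openin S {s \<in> topspace S. u < F (g s)}"
    by simp
qed

lemma upper_continuous_iff_lower_semicontinuous_map:
  "upper_continuous T d \<longleftrightarrow> lower_semicontinuous_map (prod_topology T T) (\<lambda>z. d (fst z) (snd z))"
  unfolding upper_continuous_def lower_semicontinuous_map_def ..

lemma ennreal_less_add_shrink_left:
  fixes u a c :: ennreal
  assumes "u < a + c"
  obtains a' where "a' < a \<or> a' = 0" and "u < a' + c"
proof (cases "a = 0 \<or> u < c")
  case True
  then show ?thesis using assms that[of 0] by auto
next
  case False
  then have "c \<le> u" by (simp add: not_less)
  moreover have "c < top"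
    using \<open>c \<le> u\<close> assms by (meson le_less_trans less_le_trans top_greatest)
  ultimately have "u - c < a" using assms minus_less_iff_ennreal by simp
  then obtain a' where "u - c < a'" "a' < a" using dense by blast
  then show ?thesis using that \<open>c \<le> u\<close> \<open>c < top\<close> minus_less_iff_ennreal by auto
qed

lemma lower_semicontinuous_map_add:
  fixes F G :: "'a \<Rightarrow> ennreal"
  assumes F: "lower_semicontinuous_map T F" and G: "lower_semicontinuous_map T G"
  shows "lower_semicontinuous_map T (\<lambda>t. F t + G t)"
  unfolding lower_semicontinuous_map_def
proof (intro allI openin_subopen[THEN iffD2] ballI)
  fix u t assume t: "t \<in> {t \<in> topspace T. u < F t + G t}"
  obtain a where a: "a < F t \<or> a = 0" "u < a + G t"
    using t ennreal_less_add_shrink_left by blast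
  obtain b where b: "b < G t \<or> b = 0" "u < b + a"
    using a(2) ennreal_less_add_shrink_left[of u "G t" a] by (auto simp: add.commute)
  have superlevel_or_all: "openin T {s \<in> topspace T. c < H s \<or> c = 0}"
    if "lower_semicontinuous_map T H" for c and H :: "'a \<Rightarrow> ennreal"
    using that by (cases "c = 0") (auto simp: lower_semicontinuous_map_def)
  define U where "U = {s \<in> topspace T. a < F s \<or> a = 0} \<inter> {s \<in> topspace T. b < G s \<or> b = 0}"
  have "openin T U"
    unfolding U_def using superlevel_or_all F G by blast
  moreover have "U \<subseteq> {t \<in> topspace T. u < F t + G t}"
  proof
    fix s assume s: "s \<in> U"
    then have "b + a \<le> F s + G s"
      unfolding U_def by (auto intro!: add_mono simp: add.commute less_imp_le)
    then show "s \<in> {t \<in> topspace T. u < F t + G t}"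
      using s b(2) unfolding U_def by (auto intro: less_le_trans)
  qed
  moreover have "t \<in> U"
    unfolding U_def using t a(1) b(1) by auto
  ultimately show "\<exists>U. openin T U \<and> t \<in> U \<and> U \<subseteq> {t \<in> topspace T. u < F t + G t}"
    by blast
qed

lemma lower_semicontinuous_map_attains_INF:
  fixes F :: "'a \<Rightarrow> 'b::{complete_linorder, dense_linorder}"
  assumes F: "lower_semicontinuous_map T F" and K: "compactin T K" "K \<noteq> {}"
  obtains k where "k \<in> K" and "F k = (INF t\<in>K. F t)"
proof -
  let ?m = "INF t\<in>K. F t"
  let ?\<U> = "(\<lambda>v. {t \<in> topspace T. F t \<le> v}) ` {v. ?m < v}"
  have "\<forall>C\<in>?\<U>. closedin T C"
    using F by (auto simp: lower_semicontinuous_map_iff_closedin_sublevel)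
  moreover have "K \<inter> \<Inter>\<F> \<noteq> {}" if \<F>: "finite \<F>" "\<F> \<subseteq> ?\<U>" for \<F>
  proof -
    obtain V where V: "V \<subseteq> {v. ?m < v}" "finite V" "\<F> = (\<lambda>v. {t \<in> topspace T. F t \<le> v}) ` V"
      using finite_subset_image[OF \<F>] by blast
    have "\<exists>k\<in>K. \<forall>v\<in>V. F k \<le> v"
    proof (cases "V = {}")
      case True
      then show ?thesis using K(2) by blast
    next
      case False
      then have "?m < Min V" using V by auto
      then obtain k where "k \<in> K" "F k < Min V" by (meson INF_less_iff)
      then show ?thesis using V(2) by (meson Min_le less_imp_le order_trans)
    qed
    then show ?thesis
      using V(3) K(1) compactin_subset_topspace by fastforce
  qed
  ultimately have "K \<inter> \<Inter>?\<U> \<noteq> {}"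
    using K(1) unfolding compactin_fip by blast
  then obtain k where k: "k \<in> K" "\<And>v. ?m < v \<Longrightarrow> F k \<le> v" by blast
  then have "F k = ?m"
    by (meson INF_lower antisym dense_ge)
  with k(1) show thesis by (rule that)
qed

lemma lower_semicontinuous_map_INF_compactin:
  fixes F :: "'a \<times> 'b \<Rightarrow> 'c::{complete_linorder, dense_linorder}"
  assumes S: "compact_space S" "Hausdorff_space S" and K: "compactin T K"
    and F: "lower_semicontinuous_map (prod_topology S T) F"
  shows "lower_semicontinuous_map S (\<lambda>s. INF k\<in>K. F (s, k))"
  unfolding lower_semicontinuous_map_iff_closedin_sublevel
proof
  fix u
  show "closedin S {s \<in> topspace S. (INF k\<in>K. F (s, k)) \<le> u}"
  proof (cases "K = {}")
    case True
    then show ?thesis by (cases "u = top") (simp_all add: top_unique)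
  next
    case False
    let ?C = "{z \<in> topspace (prod_topology S T). F z \<le> u} \<inter> (topspace S \<times> K)"
    have "compactin (prod_topology S T) ?C"
      using F K S(1) unfolding lower_semicontinuous_map_iff_closedin_sublevel
      by (intro closed_Int_compactin) (auto simp: compactin_Times compact_space_def)
    then have "compactin S (fst ` ?C)"
      by (rule image_compactin[OF _ continuous_map_fst])
    moreover have "fst ` ?C = {s \<in> topspace S. (INF k\<in>K. F (s, k)) \<le> u}"
    proof (intro equalityI subsetI)
      fix s assume "s \<in> fst ` ?C"
      then obtain k where "s \<in> topspace S" "k \<in> K" "F (s, k) \<le> u" by auto
      then show "s \<in> {s \<in> topspace S. (INF k\<in>K. F (s, k)) \<le> u}"
        by (auto intro: INF_lower2)
    next
      fix s assume s: "s \<in> {s \<in> topspace S. (INF k\<in>K. F (s, k)) \<le> u}"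
      then have "continuous_map T (prod_topology S T) (\<lambda>k. (s, k))"
        by (auto intro: continuous_map_pairedI)
      then have "lower_semicontinuous_map T (\<lambda>k. F (s, k))"
        by (rule lower_semicontinuous_map_compose[OF F])
      then obtain k where "k \<in> K" "F (s, k) = (INF k\<in>K. F (s, k))"
        using lower_semicontinuous_map_attains_INF K False by blast
      then show "s \<in> fst ` ?C"
        using s K compactin_subset_topspace by (force intro: rev_image_eqI[of "(s, k)"])
    qed
    ultimately show ?thesis
      using S(2) compactin_imp_closedin by metis
  qed
qed

lemma compactin_sublevel_image:
  assumes S: "compact_space S" and q: "continuous_map S T q"
    and F: "lower_semicontinuous_map S (\<lambda>s. F (q s))"
  shows "compactin T {t \<in> q ` topspace S. F t \<le> u}"
proof -
  have "closedin S {s \<in> topspace S. F (q s) \<le> u}"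
    using F unfolding lower_semicontinuous_map_iff_closedin_sublevel by blast
  then have "compactin T (q ` {s \<in> topspace S. F (q s) \<le> u})"
    by (rule image_compactin[OF closedin_compact_space[OF S] q])
  moreover have "q ` {s \<in> topspace S. F (q s) \<le> u} = {t \<in> q ` topspace S. F t \<le> u}"
    by auto
  ultimately show ?thesis
    by simp
qed

lemma lower_semicontinuous_map_upper_continuous_compose:
  assumes d: "upper_continuous T d" and p: "continuous_map S T p" and q: "continuous_map S T q"
  shows "lower_semicontinuous_map S (\<lambda>s. d (p s) (q s))"
proof -
  have "continuous_map S (prod_topology T T) (\<lambda>s. (p s, q s))"
    using p q by (rule continuous_map_pairedI)
  then show ?thesis
    using lower_semicontinuous_map_compose d
    unfolding upper_continuous_iff_lower_semicontinuous_map by fastforce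
qed

section \<open>Routes through a subset\<close>

lemma INF_ennreal_const_add':
  fixes f :: "'a \<Rightarrow> ennreal"
  shows "(INF i\<in>I. c + f i) = c + (INF i\<in>I. f i)"
proof (cases "I = {}")
  case False
  have "(INF i\<in>I. f i + c) = (INF i\<in>I. f i) + c"
    using continuous_at_Inf_mono[of "\<lambda>x. x + c" "f ` I"]
      continuous_add[of "at_right (Inf (f ` I))" "\<lambda>x. x" "\<lambda>x. c"] False
    by (auto simp: mono_def image_comp)
  then show ?thesis
    by (simp add: add.commute)
qed simp

definition dist_via :: "'a set \<Rightarrow> ('a \<Rightarrow> 'a \<Rightarrow> ennreal) \<Rightarrow> 'a \<Rightarrow> 'a \<Rightarrow> ennreal" where
  "dist_via R d p q = (INF r\<in>R. d p r + d r q)"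

lemma dist_via_le: "r \<in> R \<Longrightarrow> dist_via R d p q \<le> d p r + d r q"
  unfolding dist_via_def by (rule INF_lower)

context
  fixes S R :: "'a set" and d :: "'a \<Rightarrow> 'a \<Rightarrow> ennreal"
  assumes metric: "is_metric_on S d" and R: "R \<subseteq> S"
begin

lemma dist_le_dist_via: "p \<in> S \<Longrightarrow> q \<in> S \<Longrightarrow> d p q \<le> dist_via R d p q"
  unfolding dist_via_def using metric R by (intro INF_greatest) (auto simp: is_metric_on_def)

lemma dist_via_eq_dist:
  assumes "p \<in> S" "q \<in> S" "p \<in> R \<or> q \<in> R"
  shows "dist_via R d p q = d p q"
proof (rule antisym)
  have "d p p = 0" "d q q = 0"
    using metric assms(1,2) by (auto simp: is_metric_on_def)
  then show "dist_via R d p q \<le> d p q"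
    using assms(3) dist_via_le[of p R d p q] dist_via_le[of q R d p q] by auto
qed (use assms dist_le_dist_via in auto)

lemma dist_via_triangle_left:
  assumes p: "p \<in> S" and w: "w \<in> S" and q: "q \<in> S"
  shows "dist_via R d p q \<le> d p w + dist_via R d w q"
proof -
  have "dist_via R d p q \<le> (INF r\<in>R. d p w + (d w r + d r q))"
    unfolding dist_via_def
  proof (rule INF_mono)
    fix r assume r: "r \<in> R"
    have "d p r \<le> d p w + d w r"
      using metric p w r R unfolding is_metric_on_def by blast
    then have "d p r + d r q \<le> (d p w + d w r) + d r q"
      by (rule add_right_mono)
    then have "d p r + d r q \<le> d p w + (d w r + d r q)"
      by (simp add: ac_simps)
    then show "\<exists>r'\<in>R. d p r' + d r' q \<le> d p w + (d w r + d r q)"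
      using r by blast
  qed
  also have "\<dots> = d p w + dist_via R d w q"
    unfolding dist_via_def by (rule INF_ennreal_const_add')
  finally show ?thesis .
qed

lemma dist_via_triangle_right:
  assumes p: "p \<in> S" and w: "w \<in> S" and q: "q \<in> S"
  shows "dist_via R d p q \<le> dist_via R d p w + d w q"
proof -
  have "dist_via R d p q \<le> (INF r\<in>R. d w q + (d p r + d r w))"
    unfolding dist_via_def
  proof (rule INF_mono)
    fix r assume r: "r \<in> R"
    have "d r q \<le> d r w + d w q"
      using metric q w r R unfolding is_metric_on_def by blast
    then have "d p r + d r q \<le> d p r + (d r w + d w q)"
      by (rule add_left_mono)
    then have "d p r + d r q \<le> d w q + (d p r + d r w)"
      by (simp add: ac_simps)
    with r show "\<exists>r'\<in>R. d p r' + d r' q \<le> d w q + (d p r + d r w)"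
      by blast
  qed
  also have "\<dots> = dist_via R d p w + d w q"
    unfolding dist_via_def by (simp add: INF_ennreal_const_add' add.commute)
  finally show ?thesis .
qed

lemma dist_le_dist_via_add:
  assumes "p \<in> S" "w \<in> S" "q \<in> S"
  shows "d p q \<le> dist_via R d p w + dist_via R d w q"
proof -
  have "d p q \<le> d p w + d w q"
    using metric assms unfolding is_metric_on_def by blast
  also have "\<dots> \<le> dist_via R d p w + dist_via R d w q"
    using assms dist_le_dist_via by (intro add_mono)
  finally show ?thesis .
qed

end

lemma dist_via_attained:
  assumes d: "upper_continuous T d" and R: "compactin T R" "R \<noteq> {}"
    and p: "p \<in> topspace T" and q: "q \<in> topspace T"
  obtains r where "r \<in> R" and "dist_via R d p q = d p r + d r q"
proof -
  have id: "continuous_map T T (\<lambda>r. r)"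
    using continuous_map_id unfolding id_def .
  have "continuous_map T T (\<lambda>r. p)" "continuous_map T T (\<lambda>r. q)"
    using p q by simp_all
  from lower_semicontinuous_map_upper_continuous_compose[OF d this(1) id]
    lower_semicontinuous_map_upper_continuous_compose[OF d id this(2)]
  have "lower_semicontinuous_map T (\<lambda>r. d p r + d r q)"
    by (rule lower_semicontinuous_map_add)
  from lower_semicontinuous_map_attains_INF[OF this R]
  obtain r where "r \<in> R" "d p r + d r q = (INF r\<in>R. d p r + d r q)" .
  then show thesis
    using that[of r] by (simp add: dist_via_def)
qed

lemma dist_via_eq_0D:
  assumes A: "MetCH_sep_obj A" and R: "compactin (fst A) R"
    and p: "p \<in> carrier_of A" and q: "q \<in> carrier_of A"
    and pq: "dist_via R (snd A) p q = 0" and qp: "dist_via R (snd A) q p = 0"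
  shows "p = q \<and> p \<in> R"
proof -
  let ?d = "snd A"
  have uc: "upper_continuous (fst A) ?d"
    using A unfolding MetCH_sep_obj_def by blast
  have tri: "\<And>x y z. \<lbrakk>x \<in> carrier_of A; y \<in> carrier_of A; z \<in> carrier_of A\<rbrakk> \<Longrightarrow>
      ?d x z \<le> ?d x y + ?d y z"
    using A unfolding MetCH_sep_obj_def is_metric_on_def by blast
  have sep: "\<And>x y. \<lbrakk>x \<in> carrier_of A; y \<in> carrier_of A; ?d x y = 0; ?d y x = 0\<rbrakk> \<Longrightarrow> x = y"
    using A unfolding MetCH_sep_obj_def separated_on_def by blast
  have RA: "R \<subseteq> carrier_of A"
    using R compactin_subset_topspace unfolding carrier_of_def by blast
  have "R \<noteq> {}"
    using pq by (auto simp: dist_via_def)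
  moreover have "p \<in> topspace (fst A)" "q \<in> topspace (fst A)"
    using p q unfolding carrier_of_def .
  ultimately obtain r r' where r: "r \<in> R" "dist_via R ?d p q = ?d p r + ?d r q"
    and r': "r' \<in> R" "dist_via R ?d q p = ?d q r' + ?d r' p"
    by (metis dist_via_attained[OF uc R])
  have zero: "?d p r = 0" "?d r q = 0" "?d q r' = 0" "?d r' p = 0"
    using r r' pq qp by simp_all
  have rA: "r \<in> carrier_of A" "r' \<in> carrier_of A"
    using r r' RA by auto
  have "?d r r' \<le> ?d r q + ?d q r'" "?d r' r \<le> ?d r' p + ?d p r"
    using tri rA p q by blast+
  with zero have "r = r'"
    using sep rA by simp
  with zero have "p = r" "q = r"
    using sep rA p q by simp_all
  with r show ?thesis
    by simp
qed

lemma upper_continuous_dist_via: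
  assumes T: "compact_space T" "Hausdorff_space T" and d: "upper_continuous T d"
    and R: "compactin T R"
  shows "upper_continuous T (dist_via R d)"
proof -
  let ?TTT = "prod_topology (prod_topology T T) T"
  have "continuous_map ?TTT T (\<lambda>y. fst (fst y))" "continuous_map ?TTT T (\<lambda>y. snd (fst y))"
    using continuous_map_fst_of[OF continuous_map_fst] continuous_map_snd_of[OF continuous_map_fst]
    by (simp_all add: o_def)
  then have "lower_semicontinuous_map ?TTT (\<lambda>y. d (fst (fst y)) (snd y))"
    "lower_semicontinuous_map ?TTT (\<lambda>y. d (snd y) (snd (fst y)))"
    by (auto intro: lower_semicontinuous_map_upper_continuous_compose[OF d] continuous_map_snd)
  then have F: "lower_semicontinuous_map ?TTT (\<lambda>y. d (fst (fst y)) (snd y) + d (snd y) (snd (fst y)))"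
    by (rule lower_semicontinuous_map_add)
  have "compact_space (prod_topology T T)" "Hausdorff_space (prod_topology T T)"
    using T by (simp_all add: compact_space_prod_topology Hausdorff_space_prod_topology)
  from lower_semicontinuous_map_INF_compactin[OF this R F]
  show ?thesis
    unfolding upper_continuous_iff_lower_semicontinuous_map dist_via_def by simp
qed

section \<open>Pullbacks and pushouts of embeddings\<close>

lemma MetCH_sep_mor_carrier:
  "MetCH_sep_mor A B f \<Longrightarrow> x \<in> carrier_of A \<Longrightarrow> f x \<in> carrier_of B"
  unfolding MetCH_sep_mor_def carrier_of_def using continuous_map_image_subset_topspace by blast

lemma continuous_map_inv_into_embedding:
  assumes g: "MetCH_sep_embedding X Y g" and k: "continuous_map W (fst Y) k"
    and k_into: "\<And>w. w \<in> topspace W \<Longrightarrow> k w \<in> g ` carrier_of X"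
  shows "continuous_map W (fst X) (\<lambda>w. inv_into (carrier_of X) g (k w))"
proof -
  have X: "compact_space (fst X)" and Y: "Hausdorff_space (fst Y)"
    and cg: "continuous_map (fst X) (fst Y) g" and inj: "inj_on g (carrier_of X)"
    using g unfolding MetCH_sep_embedding_def MetCH_sep_mor_def MetCH_sep_obj_def by auto
  have "continuous_map (subtopology (fst Y) (g ` carrier_of X)) (fst X) (inv_into (carrier_of X) g)"
    using continuous_inverse_map[OF X Y cg] inj unfolding carrier_of_def by (simp add: inv_into_f_f)
  moreover have "continuous_map W (subtopology (fst Y) (g ` carrier_of X)) k"
    using k k_into by (auto simp: continuous_map_in_subtopology)
  ultimately show ?thesis
    using continuous_map_compose unfolding o_def by blast
qed

lemma is_pullbackI:
  assumes square: "commuting_square X Y1 Y2 P g1 g2 f1 f2"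
    and g1: "MetCH_sep_embedding X Y1 g1"
    and meet: "\<And>a b. \<lbrakk>a \<in> carrier_of Y1; b \<in> carrier_of Y2; f1 a = f2 b\<rbrakk> \<Longrightarrow>
      \<exists>x\<in>carrier_of X. g1 x = a \<and> g2 x = b"
  shows "is_pullback TYPE('w) X Y1 Y2 P g1 g2 f1 f2"
  unfolding is_pullback_def
proof (intro conjI square allI impI)
  fix W :: "'w metch" and k1 k2
  assume "MetCH_sep_mor W Y1 k1 \<and> MetCH_sep_mor W Y2 k2 \<and> (\<forall>w\<in>carrier_of W. f1 (k1 w) = f2 (k2 w))"
  then have k1: "MetCH_sep_mor W Y1 k1" and k2: "MetCH_sep_mor W Y2 k2"
    and k12: "\<And>w. w \<in> carrier_of W \<Longrightarrow> f1 (k1 w) = f2 (k2 w)"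
    by auto
  have inj: "inj_on g1 (carrier_of X)"
    using g1 unfolding MetCH_sep_embedding_def by blast
  define u where "u w = inv_into (carrier_of X) g1 (k1 w)" for w
  have u: "u w \<in> carrier_of X \<and> g1 (u w) = k1 w \<and> g2 (u w) = k2 w" if w: "w \<in> carrier_of W" for w
  proof -
    obtain x where x: "x \<in> carrier_of X" "g1 x = k1 w" "g2 x = k2 w"
      using meet MetCH_sep_mor_carrier[OF k1 w] MetCH_sep_mor_carrier[OF k2 w] k12[OF w] by blast
    then have "u w = x"
      unfolding u_def using inj by (metis inv_into_f_f)
    with x show ?thesis
      by simp
  qed
  have "k1 w \<in> g1 ` carrier_of X" if "w \<in> topspace (fst W)" for w
    using u[of w] that unfolding carrier_of_def by (metis image_eqI)
  then have "continuous_map (fst W) (fst X) u"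
    unfolding u_def using g1 k1
    by (intro continuous_map_inv_into_embedding) (auto simp: MetCH_sep_mor_def)
  moreover have "snd X (u w) (u w') \<le> snd W w w'"
    if "w \<in> carrier_of W" "w' \<in> carrier_of W" for w w'
    using g1 k1 u that unfolding MetCH_sep_embedding_def MetCH_sep_mor_def by metis
  ultimately have "MetCH_sep_mor W X u"
    using k1 g1 unfolding MetCH_sep_mor_def MetCH_sep_embedding_def by blast
  moreover have "v w = u w"
    if "MetCH_sep_mor W X v" "\<forall>w\<in>carrier_of W. g1 (v w) = k1 w" "w \<in> carrier_of W" for v w
    using that u inj MetCH_sep_mor_carrier by (metis inj_onD)
  ultimately show "\<exists>u. MetCH_sep_mor W X u \<and>
      (\<forall>w\<in>carrier_of W. g1 (u w) = k1 w) \<and> (\<forall>w\<in>carrier_of W. g2 (u w) = k2 w) \<and>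
      (\<forall>v. MetCH_sep_mor W X v \<and> (\<forall>w\<in>carrier_of W. g1 (v w) = k1 w) \<and>
        (\<forall>w\<in>carrier_of W. g2 (v w) = k2 w) \<longrightarrow> (\<forall>w\<in>carrier_of W. v w = u w))"
    using u by blast
qed

lemma is_pushout_factor:
  fixes Z :: "'z metch"
  assumes "is_pushout TYPE('z) X Y1 Y2 P g1 g2 f1 f2"
    and "MetCH_sep_mor Y1 Z h1" and "MetCH_sep_mor Y2 Z h2"
    and "\<forall>x\<in>carrier_of X. h1 (g1 x) = h2 (g2 x)"
  obtains u where "\<forall>y\<in>carrier_of Y1. u (f1 y) = h1 y" and "\<forall>y\<in>carrier_of Y2. u (f2 y) = h2 y"
  using assms unfolding is_pushout_def by blast

section \<open>Gluing along \<open>X\<close>\<close>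

locale embedding_cospan =
  fixes X :: "'x metch" and Y1 :: "'y1 metch" and Y2 :: "'y2 metch" and P :: "'p metch"
    and g1 :: "'x \<Rightarrow> 'y1" and g2 :: "'x \<Rightarrow> 'y2" and f1 :: "'y1 \<Rightarrow> 'p" and f2 :: "'y2 \<Rightarrow> 'p"
  assumes g1: "MetCH_sep_mor X Y1 g1" and g2: "MetCH_sep_mor X Y2 g2"
    and inj_g2: "inj_on g2 (carrier_of X)"
    and f1: "MetCH_sep_embedding Y1 P f1" and f2: "MetCH_sep_embedding Y2 P f2"
    and commutes: "\<And>x. x \<in> carrier_of X \<Longrightarrow> f1 (g1 x) = f2 (g2 x)"
begin

abbreviation "dP \<equiv> snd P"

lemma objects: "MetCH_sep_obj X" "MetCH_sep_obj Y1" "MetCH_sep_obj Y2" "MetCH_sep_obj P"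
  using g1 g2 f1 unfolding MetCH_sep_embedding_def MetCH_sep_mor_def by auto

lemma continuous_maps:
  "continuous_map (fst X) (fst Y1) g1" "continuous_map (fst X) (fst Y2) g2"
  "continuous_map (fst Y1) (fst P) f1" "continuous_map (fst Y2) (fst P) f2"
  using g1 g2 f1 f2 unfolding MetCH_sep_embedding_def MetCH_sep_mor_def by auto

lemma maps_into:
  "x \<in> carrier_of X \<Longrightarrow> g1 x \<in> carrier_of Y1" "x \<in> carrier_of X \<Longrightarrow> g2 x \<in> carrier_of Y2"
  "a \<in> carrier_of Y1 \<Longrightarrow> f1 a \<in> carrier_of P" "b \<in> carrier_of Y2 \<Longrightarrow> f2 b \<in> carrier_of P"
  using MetCH_sep_mor_carrier[OF g1] MetCH_sep_mor_carrier[OF g2]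
    MetCH_sep_mor_carrier[of Y1 P f1] MetCH_sep_mor_carrier[of Y2 P f2] f1 f2
  unfolding MetCH_sep_embedding_def by blast+

lemma inj_f: "inj_on f1 (carrier_of Y1)" "inj_on f2 (carrier_of Y2)"
  using f1 f2 unfolding MetCH_sep_embedding_def by auto

lemma dist_f:
  "a \<in> carrier_of Y1 \<Longrightarrow> a' \<in> carrier_of Y1 \<Longrightarrow> dP (f1 a) (f1 a') = snd Y1 a a'"
  "b \<in> carrier_of Y2 \<Longrightarrow> b' \<in> carrier_of Y2 \<Longrightarrow> dP (f2 b) (f2 b') = snd Y2 b b'"
  using f1 f2 unfolding MetCH_sep_embedding_def by auto

lemma metric_P: "is_metric_on (carrier_of P) dP" and separated_P: "separated_on (carrier_of P) dP"
  using objects(4) unfolding MetCH_sep_obj_def by auto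

definition image_X :: "'p set" where
  "image_X = (\<lambda>x. f1 (g1 x)) ` carrier_of X"

lemma image_X_subset: "image_X \<subseteq> carrier_of P"
  unfolding image_X_def using maps_into by auto

lemma compactin_image_X: "compactin (fst P) image_X"
proof -
  have "continuous_map (fst X) (fst P) (f1 \<circ> g1)"
    using continuous_map_compose[OF continuous_maps(1,3)] .
  moreover have "compactin (fst X) (topspace (fst X))"
    using objects(1) unfolding MetCH_sep_obj_def compact_space_def by blast
  ultimately have "compactin (fst P) ((f1 \<circ> g1) ` topspace (fst X))"
    by (rule image_compactin[rotated])
  then show ?thesis
    unfolding image_X_def carrier_of_def by (simp add: image_comp)
qed

lemma f2_in_image_X_iff:
  assumes b: "b \<in> carrier_of Y2"
  shows "f2 b \<in> image_X \<longleftrightarrow> b \<in> g2 ` carrier_of X"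
proof
  assume "f2 b \<in> image_X"
  then obtain x where x: "x \<in> carrier_of X" "f2 b = f2 (g2 x)"
    unfolding image_X_def using commutes by auto
  then have "b = g2 x"
    using inj_onD[OF inj_f(2)] b maps_into(2) by blast
  with x show "b \<in> g2 ` carrier_of X"
    by blast
next
  assume "b \<in> g2 ` carrier_of X"
  then show "f2 b \<in> image_X"
    unfolding image_X_def using commutes by auto
qed

text \<open>The test object: \<open>Y1\<close> and \<open>Y2\<close> glued along \<open>X\<close> only.  Its points are \<open>Y1\<close> together with the
  points of \<open>Y2\<close> outside \<open>g2 ` X\<close>; a distance between the two sides is measured through the
  image of \<open>X\<close> in \<open>P\<close>.  The topology is pulled back from \<open>P\<close> together with all continuous real
  functions on \<open>Y2\<close> vanishing on \<open>g2 ` X\<close>; these keep a point of \<open>Y2\<close> outside \<open>g2 ` X\<close> apart from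
  a point of \<open>Y1\<close> with the same image in \<open>P\<close>.\<close>

definition vanishing_on_X :: "('y2 \<Rightarrow> real) set" where
  "vanishing_on_X = {\<psi>. continuous_map (fst Y2) euclideanreal \<psi> \<and> (\<forall>x\<in>carrier_of X. \<psi> (g2 x) = 0)}"

definition glued_points :: "('y1 + 'y2) set" where
  "glued_points = Inl ` carrier_of Y1 \<union> Inr ` (carrier_of Y2 - g2 ` carrier_of X)"

definition glue2 :: "'y2 \<Rightarrow> 'y1 + 'y2" where
  "glue2 b = (if b \<in> g2 ` carrier_of X then Inl (g1 (inv_into (carrier_of X) g2 b)) else Inr b)"

definition glued_coords :: "'y1 + 'y2 \<Rightarrow> 'p \<times> (('y2 \<Rightarrow> real) \<Rightarrow> real)" where
  "glued_coords z = (case_sum f1 f2 z,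
     \<lambda>\<psi>. case z of Inl _ \<Rightarrow> 0 | Inr b \<Rightarrow> if \<psi> \<in> vanishing_on_X then \<psi> b else 0)"

abbreviation coords_topology :: "('p \<times> (('y2 \<Rightarrow> real) \<Rightarrow> real)) topology" where
  "coords_topology \<equiv> prod_topology (fst P) (product_topology (\<lambda>_. euclideanreal) UNIV)"

definition glued_topology :: "('y1 + 'y2) topology" where
  "glued_topology = pullback_topology glued_points glued_coords coords_topology"

definition glued_dist :: "'y1 + 'y2 \<Rightarrow> 'y1 + 'y2 \<Rightarrow> ennreal" where
  "glued_dist z z' =
     (if isl z = isl z' then dP (case_sum f1 f2 z) (case_sum f1 f2 z')
      else dist_via image_X dP (case_sum f1 f2 z) (case_sum f1 f2 z'))"

lemma glue2_g2: "x \<in> carrier_of X \<Longrightarrow> glue2 (g2 x) = Inl (g1 x)"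
  unfolding glue2_def using inj_g2 by simp

lemma isl_glue2: "isl (glue2 b) \<longleftrightarrow> b \<in> g2 ` carrier_of X"
  unfolding glue2_def by simp

lemma case_sum_glue2: "b \<in> carrier_of Y2 \<Longrightarrow> case_sum f1 f2 (glue2 b) = f2 b"
  unfolding glue2_def using commutes by (auto simp: inv_into_f_f[OF inj_g2])

lemma glue2_image:
  "glue2 ` carrier_of Y2 = Inl ` g1 ` carrier_of X \<union> Inr ` (carrier_of Y2 - g2 ` carrier_of X)"
proof (intro equalityI subsetI)
  fix z assume "z \<in> glue2 ` carrier_of Y2"
  then obtain b where b: "b \<in> carrier_of Y2" "z = glue2 b"
    by blast
  show "z \<in> Inl ` g1 ` carrier_of X \<union> Inr ` (carrier_of Y2 - g2 ` carrier_of X)"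
  proof (cases "b \<in> g2 ` carrier_of X")
    case True
    then obtain x where "x \<in> carrier_of X" "b = g2 x"
      by blast
    then show ?thesis
      using b glue2_g2 by blast
  next
    case False
    then show ?thesis
      using b unfolding glue2_def by simp
  qed
next
  fix z assume "z \<in> Inl ` g1 ` carrier_of X \<union> Inr ` (carrier_of Y2 - g2 ` carrier_of X)"
  then show "z \<in> glue2 ` carrier_of Y2"
  proof
    assume "z \<in> Inl ` g1 ` carrier_of X"
    then obtain x where "x \<in> carrier_of X" "z = Inl (g1 x)"
      by blast
    then show ?thesis
      using glue2_g2 maps_into(2) by (metis image_eqI)
  next
    assume "z \<in> Inr ` (carrier_of Y2 - g2 ` carrier_of X)"
    then obtain b where "b \<in> carrier_of Y2" "b \<notin> g2 ` carrier_of X" "z = Inr b"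
      by blast
    then show ?thesis
      unfolding glue2_def by (intro rev_image_eqI[of b]) simp_all
  qed
qed

lemma glued_points_eq: "glued_points = Inl ` carrier_of Y1 \<union> glue2 ` carrier_of Y2"
  unfolding glued_points_def glue2_image using maps_into(1) by blast

lemma case_sum_glued_points: "z \<in> glued_points \<Longrightarrow> case_sum f1 f2 z \<in> carrier_of P"
  unfolding glued_points_def using maps_into by auto

lemma glued_points_eqI:
  assumes z: "z \<in> glued_points" and z': "z' \<in> glued_points"
    and isl: "isl z = isl z'" and proj: "case_sum f1 f2 z = case_sum f1 f2 z'"
  shows "z = z'"
proof (cases z)
  case (Inl a)
  with isl obtain a' where "z' = Inl a'"
    by (cases z') auto
  with Inl z z' proj show ?thesis
    unfolding glued_points_def using inj_onD[OF inj_f(1)] by auto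
next
  case (Inr b)
  with isl obtain b' where "z' = Inr b'"
    by (cases z') auto
  with Inr z z' proj show ?thesis
    unfolding glued_points_def using inj_onD[OF inj_f(2)] by auto
qed

lemma vanishing_on_X_separates:
  assumes b: "b \<in> carrier_of Y2" "b \<notin> g2 ` carrier_of X"
  obtains \<psi> where "\<psi> \<in> vanishing_on_X" and "\<psi> b = 1"
proof -
  have X: "compact_space (fst X)" and Y2: "compact_space (fst Y2)" "Hausdorff_space (fst Y2)"
    using objects(1,3) unfolding MetCH_sep_obj_def by auto
  have "normal_space (fst Y2)"
    using Y2 by (simp add: compact_Hausdorff_or_regular_imp_normal_space)
  moreover have "closedin (fst Y2) (g2 ` carrier_of X)"
    using compactin_imp_closedin[OF Y2(2) image_compactin[OF X[unfolded compact_space_def] continuous_maps(2)]]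
    unfolding carrier_of_def .
  moreover have "closedin (fst Y2) {b}"
    using closedin_Hausdorff_singleton[OF Y2(2)] b(1) unfolding carrier_of_def .
  moreover have "disjnt (g2 ` carrier_of X) {b}"
    using b(2) by simp
  ultimately obtain \<psi> where \<psi>: "continuous_map (fst Y2) euclideanreal \<psi>"
    "\<psi> ` g2 ` carrier_of X \<subseteq> {0}" "\<psi> ` {b} \<subseteq> {1}"
    by (rule Urysohn_lemma_alt)
  have "\<psi> \<in> vanishing_on_X"
    using \<psi>(1,2) unfolding vanishing_on_X_def by (simp add: image_subset_iff)
  moreover have "\<psi> b = 1"
    using \<psi>(3) by simp
  ultimately show thesis
    by (rule that)
qed

lemma topspace_glued_topology: "topspace glued_topology = glued_points"
  unfolding glued_topology_def topspace_pullback_topology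
  using case_sum_glued_points by (auto simp: glued_coords_def carrier_of_def)

lemma continuous_map_Inl_glued_topology: "continuous_map (fst Y1) glued_topology Inl"
  unfolding glued_topology_def
proof (rule continuous_map_pullback')
  have "continuous_map (fst Y1) coords_topology (\<lambda>a. (f1 a, \<lambda>\<psi>. 0))"
    by (intro continuous_map_pairedI continuous_maps(3)) (simp add: continuous_map_componentwise_UNIV)
  then show "continuous_map (fst Y1) coords_topology (glued_coords \<circ> Inl)"
    by (simp add: glued_coords_def o_def)
  show "topspace (fst Y1) \<subseteq> Inl -` glued_points"
    unfolding glued_points_def carrier_of_def by auto
qed

lemma glued_coords_glue2:
  assumes "b \<in> carrier_of Y2"
  shows "glued_coords (glue2 b) = (f2 b, \<lambda>\<psi>. if \<psi> \<in> vanishing_on_X then \<psi> b else 0)"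
proof (cases "b \<in> g2 ` carrier_of X")
  case True
  then obtain x where x: "x \<in> carrier_of X" "b = g2 x"
    by blast
  then have "\<psi> b = 0" if "\<psi> \<in> vanishing_on_X" for \<psi>
    using that unfolding vanishing_on_X_def by auto
  with x show ?thesis
    using glue2_g2 commutes by (auto simp: glued_coords_def fun_eq_iff)
next
  case False
  then show ?thesis
    by (simp add: glue2_def glued_coords_def)
qed

lemma continuous_map_glue2: "continuous_map (fst Y2) glued_topology glue2"
  unfolding glued_topology_def
proof (rule continuous_map_pullback')
  have "continuous_map (fst Y2) euclideanreal (\<lambda>b. if \<psi> \<in> vanishing_on_X then \<psi> b else 0)" for \<psi>
    by (cases "\<psi> \<in> vanishing_on_X") (simp_all add: vanishing_on_X_def)
  then have "continuous_map (fst Y2) coords_topology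
      (\<lambda>b. (f2 b, \<lambda>\<psi>. if \<psi> \<in> vanishing_on_X then \<psi> b else 0))"
    by (intro continuous_map_pairedI continuous_maps(4)) (simp add: continuous_map_componentwise_UNIV)
  then show "continuous_map (fst Y2) coords_topology (glued_coords \<circ> glue2)"
    by (rule continuous_map_eq) (simp add: glued_coords_glue2 carrier_of_def)
  show "topspace (fst Y2) \<subseteq> glue2 -` glued_points"
    using glued_points_eq unfolding carrier_of_def by auto
qed

lemma compact_space_glued_topology: "compact_space glued_topology"
proof -
  have "compactin glued_topology (Inl ` carrier_of Y1)" "compactin glued_topology (glue2 ` carrier_of Y2)"
    using image_compactin[OF _ continuous_map_Inl_glued_topology] image_compactin[OF _ continuous_map_glue2]
      objects(2,3) unfolding MetCH_sep_obj_def compact_space_def carrier_of_def by blast+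
  then show ?thesis
    unfolding compact_space_def topspace_glued_topology glued_points_eq by (rule compactin_Un)
qed

lemma glued_coords_Inl_neq_Inr:
  assumes "Inr b \<in> glued_points"
  shows "glued_coords (Inl a) \<noteq> glued_coords (Inr b)"
proof
  assume eq: "glued_coords (Inl a) = glued_coords (Inr b)"
  from assms have "b \<in> carrier_of Y2" "b \<notin> g2 ` carrier_of X"
    unfolding glued_points_def by auto
  then obtain \<psi> where \<psi>: "\<psi> \<in> vanishing_on_X" "\<psi> b = 1"
    by (rule vanishing_on_X_separates)
  from eq have "\<forall>\<phi>. (if \<phi> \<in> vanishing_on_X then \<phi> b else 0) = (0::real)"
    unfolding glued_coords_def by (simp add: fun_eq_iff)
  with \<psi> show False
    by (metis zero_neq_one)
qed

lemma inj_on_glued_coords: "inj_on glued_coords glued_points"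
proof (rule inj_onI)
  fix z z' assume z: "z \<in> glued_points" and z': "z' \<in> glued_points"
    and eq: "glued_coords z = glued_coords z'"
  have "isl z = isl z'"
  proof (cases z; cases z')
    fix a b assume "z = Inl a" "z' = Inr b"
    then show ?thesis
      using z' eq glued_coords_Inl_neq_Inr by blast
  next
    fix b a assume "z = Inr b" "z' = Inl a"
    then show ?thesis
      using z eq glued_coords_Inl_neq_Inr by metis
  qed simp_all
  moreover have "case_sum f1 f2 z = case_sum f1 f2 z'"
    using eq by (simp add: glued_coords_def)
  ultimately show "z = z'"
    using glued_points_eqI z z' by blast
qed

lemma Hausdorff_space_glued_topology: "Hausdorff_space glued_topology"
proof -
  have "Hausdorff_space coords_topology"
    using objects(4) unfolding MetCH_sep_obj_def
    by (simp add: Hausdorff_space_prod_topology Hausdorff_space_product_topology)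
  moreover have "continuous_map glued_topology coords_topology glued_coords"
    unfolding glued_topology_def using continuous_map_pullback[OF continuous_map_id] by simp
  moreover have "inj_on glued_coords (topspace glued_topology)"
    using inj_on_glued_coords topspace_glued_topology by simp
  ultimately show ?thesis
    by (rule Hausdorff_space_injective_preimage)
qed

lemma glued_dist_Inl_Inl:
  "a \<in> carrier_of Y1 \<Longrightarrow> a' \<in> carrier_of Y1 \<Longrightarrow> glued_dist (Inl a) (Inl a') = snd Y1 a a'"
  unfolding glued_dist_def using dist_f(1) by simp

lemma glued_dist_glue2_glue2:
  assumes b: "b \<in> carrier_of Y2" and b': "b' \<in> carrier_of Y2"
  shows "glued_dist (glue2 b) (glue2 b') = snd Y2 b b'"
proof -
  have "glued_dist (glue2 b) (glue2 b') = dP (f2 b) (f2 b')"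
  proof (cases "isl (glue2 b) = isl (glue2 b')")
    case True
    then show ?thesis
      unfolding glued_dist_def using case_sum_glue2 b b' by simp
  next
    case False
    then have "f2 b \<in> image_X \<or> f2 b' \<in> image_X"
      using isl_glue2 f2_in_image_X_iff b b' by auto
    then show ?thesis
      unfolding glued_dist_def using False case_sum_glue2 b b' maps_into(4)
        dist_via_eq_dist[OF metric_P image_X_subset] by simp
  qed
  then show ?thesis
    using dist_f(2) b b' by simp
qed

lemma glued_dist_Inl_glue2:
  assumes a: "a \<in> carrier_of Y1" and b: "b \<in> carrier_of Y2"
  shows "glued_dist (Inl a) (glue2 b) = dist_via image_X dP (f1 a) (f2 b)"
proof (cases "b \<in> g2 ` carrier_of X")
  case True
  then have "f2 b \<in> image_X"
    using f2_in_image_X_iff b by blast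
  then show ?thesis
    unfolding glued_dist_def using True isl_glue2 case_sum_glue2 a b maps_into(3,4)
      dist_via_eq_dist[OF metric_P image_X_subset] by simp
next
  case False
  then show ?thesis
    unfolding glued_dist_def using isl_glue2 case_sum_glue2 b by simp
qed

lemma glued_dist_glue2_Inl:
  assumes a: "a \<in> carrier_of Y1" and b: "b \<in> carrier_of Y2"
  shows "glued_dist (glue2 b) (Inl a) = dist_via image_X dP (f2 b) (f1 a)"
proof (cases "b \<in> g2 ` carrier_of X")
  case True
  then have "f2 b \<in> image_X"
    using f2_in_image_X_iff b by blast
  then show ?thesis
    unfolding glued_dist_def using True isl_glue2 case_sum_glue2 a b maps_into(3,4)
      dist_via_eq_dist[OF metric_P image_X_subset] by simp
next
  case False
  then show ?thesis
    unfolding glued_dist_def using isl_glue2 case_sum_glue2 b by simp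
qed

lemma glued_dist_self: "z \<in> glued_points \<Longrightarrow> glued_dist z z = 0"
  unfolding glued_dist_def using case_sum_glued_points metric_P unfolding is_metric_on_def by simp

lemma glued_dist_triangle:
  assumes "z \<in> glued_points" "w \<in> glued_points" "y \<in> glued_points"
  shows "glued_dist z y \<le> glued_dist z w + glued_dist w y"
proof -
  let ?p = "case_sum f1 f2"
  have p: "?p z \<in> carrier_of P" "?p w \<in> carrier_of P" "?p y \<in> carrier_of P"
    using case_sum_glued_points assms by auto
  have "dP (?p z) (?p y) \<le> dP (?p z) (?p w) + dP (?p w) (?p y)"
    using metric_P p unfolding is_metric_on_def by blast
  with dist_via_triangle_left[OF metric_P image_X_subset p]
    dist_via_triangle_right[OF metric_P image_X_subset p]
    dist_le_dist_via_add[OF metric_P image_X_subset p]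
  show ?thesis
    unfolding glued_dist_def by (cases "isl z"; cases "isl w"; cases "isl y") simp_all
qed

lemma glued_points_Inr_notin_image_X:
  "z \<in> glued_points \<Longrightarrow> \<not> isl z \<Longrightarrow> case_sum f1 f2 z \<notin> image_X"
  unfolding glued_points_def using f2_in_image_X_iff by auto

lemma glued_dist_separated:
  assumes z: "z \<in> glued_points" and z': "z' \<in> glued_points"
    and zero: "glued_dist z z' = 0" "glued_dist z' z = 0"
  shows "z = z'"
proof -
  let ?p = "case_sum f1 f2"
  have p: "?p z \<in> carrier_of P" "?p z' \<in> carrier_of P"
    using case_sum_glued_points z z' by auto
  show ?thesis
  proof (cases "isl z = isl z'")
    case True
    with zero have "dP (?p z) (?p z') = 0" "dP (?p z') (?p z) = 0"
      unfolding glued_dist_def by simp_all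
    with p have "?p z = ?p z'"
      using separated_P unfolding separated_on_def by blast
    with True show ?thesis
      using glued_points_eqI z z' by blast
  next
    case False
    with zero have "dist_via image_X dP (?p z) (?p z') = 0" "dist_via image_X dP (?p z') (?p z) = 0"
      unfolding glued_dist_def by (simp_all add: eq_commute[of "isl z"])
    with p have "?p z = ?p z'" "?p z \<in> image_X"
      using dist_via_eq_0D[OF objects(4) compactin_image_X] by blast+
    moreover have "\<not> isl z \<or> \<not> isl z'"
      using False by blast
    ultimately show ?thesis
      using glued_points_Inr_notin_image_X z z' by metis
  qed
qed

lemma compactin_glued_dist_sublevel:
  assumes A: "compact_space A" and B: "compact_space B"
    and q: "continuous_map A glued_topology q" and q': "continuous_map B glued_topology q'"
    and F: "lower_semicontinuous_map (prod_topology A B) (\<lambda>z. glued_dist (q (fst z)) (q' (snd z)))"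
  shows "compactin (prod_topology glued_topology glued_topology)
    {z \<in> q ` topspace A \<times> q' ` topspace B. glued_dist (fst z) (snd z) \<le> u}"
proof -
  have "compact_space (prod_topology A B)"
    using A B by (simp add: compact_space_prod_topology)
  moreover have "continuous_map (prod_topology A B) (prod_topology glued_topology glued_topology)
      (map_prod q q')"
    unfolding map_prod_def using q q' by (simp add: continuous_map_prod_top)
  moreover have "lower_semicontinuous_map (prod_topology A B)
      (\<lambda>s. glued_dist (fst (map_prod q q' s)) (snd (map_prod q q' s)))"
    using F by simp
  ultimately have "compactin (prod_topology glued_topology glued_topology)
      {z \<in> map_prod q q' ` topspace (prod_topology A B). glued_dist (fst z) (snd z) \<le> u}"
    by (rule compactin_sublevel_image)
  then show ?thesis
    by (simp add: map_prod_surj_on)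
qed

lemma lower_semicontinuous_map_glued_dist:
  "lower_semicontinuous_map (prod_topology (fst Y1) (fst Y1)) (\<lambda>z. glued_dist (Inl (fst z)) (Inl (snd z)))"
  "lower_semicontinuous_map (prod_topology (fst Y2) (fst Y2)) (\<lambda>z. glued_dist (glue2 (fst z)) (glue2 (snd z)))"
  "lower_semicontinuous_map (prod_topology (fst Y1) (fst Y2)) (\<lambda>z. glued_dist (Inl (fst z)) (glue2 (snd z)))"
  "lower_semicontinuous_map (prod_topology (fst Y2) (fst Y1)) (\<lambda>z. glued_dist (glue2 (fst z)) (Inl (snd z)))"
proof -
  have Y: "upper_continuous (fst Y1) (snd Y1)" "upper_continuous (fst Y2) (snd Y2)"
    using objects(2,3) unfolding MetCH_sep_obj_def by auto
  have via: "upper_continuous (fst P) (dist_via image_X dP)"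
    using objects(4) compactin_image_X upper_continuous_dist_via unfolding MetCH_sep_obj_def by blast
  have f1_fst: "continuous_map (prod_topology (fst Y1) B) (fst P) (\<lambda>z. f1 (fst z))"
    and f1_snd: "continuous_map (prod_topology B (fst Y1)) (fst P) (\<lambda>z. f1 (snd z))"
    and f2_fst: "continuous_map (prod_topology (fst Y2) B) (fst P) (\<lambda>z. f2 (fst z))"
    and f2_snd: "continuous_map (prod_topology B (fst Y2)) (fst P) (\<lambda>z. f2 (snd z))"
    for B :: "'b topology"
    using continuous_map_compose[OF continuous_map_fst continuous_maps(3)]
      continuous_map_compose[OF continuous_map_snd continuous_maps(3)]
      continuous_map_compose[OF continuous_map_fst continuous_maps(4)]
      continuous_map_compose[OF continuous_map_snd continuous_maps(4)]
    by (simp_all add: o_def)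
  show "lower_semicontinuous_map (prod_topology (fst Y1) (fst Y1))
      (\<lambda>z. glued_dist (Inl (fst z)) (Inl (snd z)))"
    using Y(1) unfolding upper_continuous_iff_lower_semicontinuous_map
    by (subst lower_semicontinuous_map_cong)
      (auto simp: glued_dist_Inl_Inl carrier_of_def topspace_prod_topology)
  show "lower_semicontinuous_map (prod_topology (fst Y2) (fst Y2))
      (\<lambda>z. glued_dist (glue2 (fst z)) (glue2 (snd z)))"
    using Y(2) unfolding upper_continuous_iff_lower_semicontinuous_map
    by (subst lower_semicontinuous_map_cong)
      (auto simp: glued_dist_glue2_glue2 carrier_of_def topspace_prod_topology)
  show "lower_semicontinuous_map (prod_topology (fst Y1) (fst Y2))
      (\<lambda>z. glued_dist (Inl (fst z)) (glue2 (snd z)))"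
    using lower_semicontinuous_map_upper_continuous_compose[OF via f1_fst f2_snd]
    by (subst lower_semicontinuous_map_cong)
      (auto simp: glued_dist_Inl_glue2 carrier_of_def topspace_prod_topology)
  show "lower_semicontinuous_map (prod_topology (fst Y2) (fst Y1))
      (\<lambda>z. glued_dist (glue2 (fst z)) (Inl (snd z)))"
    using lower_semicontinuous_map_upper_continuous_compose[OF via f2_fst f1_snd]
    by (subst lower_semicontinuous_map_cong)
      (auto simp: glued_dist_glue2_Inl carrier_of_def topspace_prod_topology)
qed

lemma upper_continuous_glued_dist: "upper_continuous glued_topology glued_dist"
  unfolding upper_continuous_iff_lower_semicontinuous_map lower_semicontinuous_map_iff_closedin_sublevel
proof
  fix u
  let ?ZZ = "prod_topology glued_topology glued_topology"
  let ?I1 = "Inl ` topspace (fst Y1)" and ?I2 = "glue2 ` topspace (fst Y2)"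
  let ?S = "\<lambda>A B. {z \<in> A \<times> B. glued_dist (fst z) (snd z) \<le> u}"
  note cont_Inl = continuous_map_Inl_glued_topology and cont_glue2 = continuous_map_glue2
  have Y: "compact_space (fst Y1)" "compact_space (fst Y2)"
    using objects(2,3) unfolding MetCH_sep_obj_def by auto
  have "compactin ?ZZ (?S ?I1 ?I1)" "compactin ?ZZ (?S ?I2 ?I2)"
    "compactin ?ZZ (?S ?I1 ?I2)" "compactin ?ZZ (?S ?I2 ?I1)"
    using compactin_glued_dist_sublevel[OF Y(1) Y(1) cont_Inl cont_Inl lower_semicontinuous_map_glued_dist(1)]
      compactin_glued_dist_sublevel[OF Y(2) Y(2) cont_glue2 cont_glue2 lower_semicontinuous_map_glued_dist(2)]
      compactin_glued_dist_sublevel[OF Y(1) Y(2) cont_Inl cont_glue2 lower_semicontinuous_map_glued_dist(3)]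
      compactin_glued_dist_sublevel[OF Y(2) Y(1) cont_glue2 cont_Inl lower_semicontinuous_map_glued_dist(4)]
    by blast+
  moreover have "{z \<in> topspace ?ZZ. glued_dist (fst z) (snd z) \<le> u} =
      ?S ?I1 ?I1 \<union> ?S ?I2 ?I2 \<union> ?S ?I1 ?I2 \<union> ?S ?I2 ?I1"
    unfolding topspace_prod_topology topspace_glued_topology glued_points_eq carrier_of_def by blast
  ultimately have "compactin ?ZZ {z \<in> topspace ?ZZ. glued_dist (fst z) (snd z) \<le> u}"
    by (simp add: compactin_Un)
  moreover have "Hausdorff_space ?ZZ"
    using Hausdorff_space_glued_topology by (simp add: Hausdorff_space_prod_topology)
  ultimately show "closedin ?ZZ {z \<in> topspace ?ZZ. glued_dist (fst z) (snd z) \<le> u}"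
    by (simp add: compactin_imp_closedin)
qed

definition glued_space :: "('y1 + 'y2) metch" where
  "glued_space = (glued_topology, glued_dist)"

lemma MetCH_sep_obj_glued_space: "MetCH_sep_obj glued_space"
  unfolding MetCH_sep_obj_def glued_space_def carrier_of_def is_metric_on_def separated_on_def
  using compact_space_glued_topology Hausdorff_space_glued_topology upper_continuous_glued_dist
    glued_dist_self glued_dist_triangle glued_dist_separated
  by (simp add: topspace_glued_topology)

lemma MetCH_sep_mor_Inl_glued_space: "MetCH_sep_mor Y1 glued_space Inl"
  unfolding MetCH_sep_mor_def
  using objects(2) MetCH_sep_obj_glued_space continuous_map_Inl_glued_topology glued_dist_Inl_Inl
  by (simp add: glued_space_def)

lemma MetCH_sep_mor_glue2: "MetCH_sep_mor Y2 glued_space glue2"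
  unfolding MetCH_sep_mor_def
  using objects(3) MetCH_sep_obj_glued_space continuous_map_glue2 glued_dist_glue2_glue2
  by (simp add: glued_space_def)

lemma pushout_images_meet_in_X:
  assumes po: "is_pushout TYPE('y1 + 'y2) X Y1 Y2 P g1 g2 f1 f2"
    and a: "a \<in> carrier_of Y1" and b: "b \<in> carrier_of Y2" and eq: "f1 a = f2 b"
  shows "\<exists>x\<in>carrier_of X. g1 x = a \<and> g2 x = b"
proof (cases "b \<in> g2 ` carrier_of X")
  case True
  then obtain x where x: "x \<in> carrier_of X" "b = g2 x"
    by blast
  then have "f1 a = f1 (g1 x)"
    using eq commutes by simp
  then have "a = g1 x"
    using inj_onD[OF inj_f(1)] a maps_into(1)[OF x(1)] by blast
  with x show ?thesis
    by blast
next
  case False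
  have "\<forall>x\<in>carrier_of X. Inl (g1 x) = glue2 (g2 x)"
    using glue2_g2 by simp
  then obtain u where u: "\<forall>y\<in>carrier_of Y1. u (f1 y) = Inl y" "\<forall>y\<in>carrier_of Y2. u (f2 y) = glue2 y"
    using is_pushout_factor[OF po MetCH_sep_mor_Inl_glued_space MetCH_sep_mor_glue2] by blast
  have "Inl a = u (f1 a)"
    using u(1) a by simp
  also have "\<dots> = u (f2 b)"
    using eq by simp
  also have "\<dots> = glue2 b"
    using u(2) b by simp
  also have "\<dots> = Inr b"
    using False by (simp add: glue2_def)
  finally show ?thesis
    by simp
qed

end

theorem lemma4p4:
  fixes X :: "'x metch" and Y1 :: "'y1 metch" and Y2 :: "'y2 metch" and P :: "'p metch"
    and g1 :: "'x \<Rightarrow> 'y1" and g2 :: "'x \<Rightarrow> 'y2" and f1 :: "'y1 \<Rightarrow> 'p" and f2 :: "'y2 \<Rightarrow> 'p"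
  assumes "MetCH_sep_embedding X Y1 g1" and "MetCH_sep_embedding X Y2 g2"
    and "MetCH_sep_embedding Y1 P f1" and "MetCH_sep_embedding Y2 P f2"
    and "is_pushout TYPE('y1 + 'y2) X Y1 Y2 P g1 g2 f1 f2"
  shows "is_pullback TYPE('w) X Y1 Y2 P g1 g2 f1 f2"
proof -
  have square: "commuting_square X Y1 Y2 P g1 g2 f1 f2"
    using assms(5) unfolding is_pushout_def by blast
  interpret embedding_cospan X Y1 Y2 P g1 g2 f1 f2
    by unfold_locales
      (use assms(1-4) square in \<open>auto simp: commuting_square_def MetCH_sep_embedding_def\<close>)
  show ?thesis
    using square assms(1) pushout_images_meet_in_X[OF assms(5)] by (rule is_pullbackI)
qed

end
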